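(* Let $\lambda,\mu$ be partitions and $x$ an indeterminate. Put $$X_{\lambda\mu}(x):=\prod_{(i,j)\in[\mu]}(j-i-x)\prod_{(i,j)\in [\lambda]}\biggl((j-i-\mu_1+x)\prod_{1\le k\le\mu_1}\frac{j-i+\bar{\mu}_k-k+1+x}{j-i+\bar{\mu}_k-k+x}\biggr)$$ and $$Z_{\lambda\mu}(x):=\prod_{(i,j) \in [\lambda]}(h_{i,j}^{\lambda,\mu}+x)\prod_{(i,j) \in [\mu]}(h_{i,j}^{\mu,\lambda}-x).$$ Then $X_{\lambda\mu}(x)=Z_{\lambda\mu}(x)$.
   Context: For a partition $\lambda$, $[\lambda]=\{(i,j): i\ge1,\ 1\le j\le\lambda_i\}$ is its diagram and $\bar\lambda$ is the conjugate partition ($\bar\lambda_k$ = number of $i$ with $\lambda_i\ge k$). For partitions $\lambda,\mu$ and a node $(i,j)\in[\lambda]$, the generalized hook length is $h^{\lambda,\mu}_{i,j}=\lambda_i-i+\bar\mu_j-j+1$. *)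

theory Defs
  imports "HOL-Computational_Algebra.Polynomial" "HOL-Computational_Algebra.Fraction_Field"
begin

definition is_partition :: "nat list \<Rightarrow> bool" where
  "is_partition l \<longleftrightarrow> sorted_wrt (\<ge>) l \<and> 0 \<notin> set l"

(* part l i = lambda_i (1-indexed), 0 beyond the length *)
definition part :: "nat list \<Rightarrow> nat \<Rightarrow> nat" where
  "part l i = (if 1 \<le> i \<and> i \<le> length l then l ! (i - 1) else 0)"

definition conjp :: "nat list \<Rightarrow> nat \<Rightarrow> nat" where
  "conjp l k = card {i. 1 \<le> i \<and> part l i \<ge> k}"

definition diagram :: "nat list \<Rightarrow> (nat \<times> nat) set" where
  "diagram l = {(i, j). 1 \<le> i \<and> 1 \<le> j \<and> j \<le> part l i}"

definition ghook :: "nat list \<Rightarrow> nat list \<Rightarrow> nat \<Rightarrow> nat \<Rightarrow> int" where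
  "ghook l m i j = int (part l i) - int i + int (conjp m j) - int j + 1"

definition indet :: "rat poly fract" where
  "indet = Fract [:0, 1:] 1"

end

theory Submission
  imports Defs
begin

text \<open>
  Build \<open>\<lambda>\<close> cell by cell, row after row, and compare how both sides change. Adding a
  cell of content \<open>c\<close> multiplies \<open>X\<close> by a factor \<open>G\<^sub>\<mu>(c)\<close> that depends on \<open>c\<close> only. It
  multiplies \<open>Z\<close> by the change of the hooks in its row of \<open>\<lambda>\<close> and in its column \<open>L\<close>
  of \<open>\<mu>\<close>; as a function of \<open>L\<close> this change is constant, since passing from \<open>L\<close> to
  \<open>L + 1\<close> only trades the hook ratios of the rows of \<open>\<mu>\<close> of length exactly \<open>L\<close>, which
  telescope. For \<open>L = \<mu>\<^sub>1 + 1\<close> it is visibly \<open>G\<^sub>\<mu>(c)\<close>. For \<open>\<lambda> = \<emptyset>\<close> the identity is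
  the reflection \<open>j \<mapsto> \<mu>\<^sub>i + 1 - j\<close> inside each row of \<open>\<mu>\<close>.
\<close>

lemma part_antimono:
  assumes "sorted_wrt (\<ge>) l" "1 \<le> i" "i \<le> i'"
  shows "part l i' \<le> part l i"
proof (cases "i' \<le> length l \<and> i < i'")
  case True
  hence "i - 1 < i' - 1" "i' - 1 < length l" using assms(2) by auto
  hence "l ! (i' - 1) \<le> l ! (i - 1)"
    using assms(1) by (simp add: sorted_wrt_iff_nth_less)
  thus ?thesis using assms True by (simp add: part_def)
qed (use assms in \<open>auto simp: part_def\<close>)

lemma part_eq_0: "length l < i \<Longrightarrow> part l i = 0"
  by (simp add: part_def)

lemma part_snoc: "part (l @ [b]) i = (if i = Suc (length l) then b else part l i)"
  by (auto simp: part_def nth_append)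

lemma part_snoc_0: "part (l @ [0]) = part l"
  by (rule ext) (simp add: part_snoc part_eq_0)

lemma finite_diagram: "finite (diagram l)"
proof (rule finite_subset)
  show "diagram l \<subseteq> {1..length l} \<times> {1..sum_list l}"
  proof
    fix x assume "x \<in> diagram l"
    then obtain i j where x: "x = (i, j)" "1 \<le> i" "1 \<le> j" "j \<le> part l i"
      by (auto simp: diagram_def)
    have "part l i \<le> sum_list l"
      by (auto simp: part_def intro: member_le_sum_list)
    moreover have "i \<le> length l"
      using x part_eq_0[of l i] by (cases "length l < i") auto
    ultimately show "x \<in> {1..length l} \<times> {1..sum_list l}" using x by auto
  qed
qed simp

lemma diagram_snoc:
  "diagram (l @ [b]) = diagram l \<union> (\<lambda>j. (Suc (length l), j)) ` {1..b}"
  by (auto simp: diagram_def part_snoc part_eq_0 image_iff split: if_splits)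

lemma prod_diagram_snoc:
  "(\<Prod>(i, j)\<in>diagram (l @ [b]). f i j) =
     (\<Prod>(i, j)\<in>diagram l. f i j) * (\<Prod>j=1..b. f (Suc (length l)) j)"
proof -
  have "diagram l \<inter> (\<lambda>j. (Suc (length l), j)) ` {1..b} = {}"
    by (auto simp: diagram_def part_eq_0)
  thus ?thesis
    by (simp add: diagram_snoc prod.union_disjoint finite_diagram prod.reindex inj_on_def)
qed

lemma finite_conjp_set: "1 \<le> k \<Longrightarrow> finite {i. 1 \<le> i \<and> k \<le> part l i}"
  by (rule finite_subset[of _ "{1..length l}"]) (auto simp: part_def split: if_splits)

lemma conjp_snoc:
  assumes "1 \<le> k"
  shows "conjp (l @ [b]) k = conjp l k + (if k \<le> b then 1 else 0)"
proof -
  have "{i. 1 \<le> i \<and> k \<le> part (l @ [b]) i} =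
        {i. 1 \<le> i \<and> k \<le> part l i} \<union> (if k \<le> b then {Suc (length l)} else {})"
    using assms by (auto simp: part_snoc part_eq_0)
  moreover have "Suc (length l) \<notin> {i. 1 \<le> i \<and> k \<le> part l i}"
    using assms by (simp add: part_eq_0)
  ultimately show ?thesis
    using finite_conjp_set[OF assms] by (simp add: conjp_def)
qed

lemma conjp_eq_length:
  assumes "1 \<le> k" "\<forall>x\<in>set l. k \<le> x"
  shows "conjp l k = length l"
proof -
  have "{i. 1 \<le> i \<and> k \<le> part l i} = {1..length l}"
    using assms by (auto simp: part_def)
  thus ?thesis by (simp add: conjp_def)
qed

lemma conjp_Nil: "conjp [] k = 0"
proof (cases "k = 0")
  case True
  hence "{i. 1 \<le> i \<and> k \<le> part [] i} = {1..}" by auto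
  thus ?thesis by (simp add: conjp_def infinite_Ici)
qed (simp add: conjp_def part_def)

lemma conjp_set_eq:
  assumes "sorted_wrt (\<ge>) l" "1 \<le> k"
  shows "{i. 1 \<le> i \<and> k \<le> part l i} = {1..conjp l k}"
proof (cases "{i. 1 \<le> i \<and> k \<le> part l i} = {}")
  case False
  define S where "S = {i. 1 \<le> i \<and> k \<le> part l i}"
  have "finite S" using finite_conjp_set[OF assms(2)] by (simp add: S_def)
  have "Max S \<in> S" by (rule Max_in[OF \<open>finite S\<close>]) (use False in \<open>simp add: S_def\<close>)
  have "S = {1..Max S}"
  proof
    show "S \<subseteq> {1..Max S}" using \<open>finite S\<close> by (auto simp: S_def)
    show "{1..Max S} \<subseteq> S"
    proof
      fix i assume "i \<in> {1..Max S}"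
      thus "i \<in> S"
        using \<open>Max S \<in> S\<close> part_antimono[OF assms(1), of i "Max S"] by (auto simp: S_def)
    qed
  qed
  moreover from this have "card S = Max S" by (metis card_atLeastAtMost diff_Suc_1)
  ultimately show ?thesis unfolding conjp_def S_def[symmetric] by simp
next
  case True
  thus ?thesis unfolding conjp_def by (simp only: True card.empty) simp
qed

lemma le_conjp_iff:
  assumes "sorted_wrt (\<ge>) l" "1 \<le> k" "1 \<le> i"
  shows "i \<le> conjp l k \<longleftrightarrow> k \<le> part l i"
proof -
  have "i \<in> {i. 1 \<le> i \<and> k \<le> part l i} \<longleftrightarrow> i \<in> {1..conjp l k}"
    by (simp only: conjp_set_eq[OF assms(1,2)])
  thus ?thesis using assms(3) by simp
qed

lemma conjp_antimono: "1 \<le> k \<Longrightarrow> k \<le> k' \<Longrightarrow> conjp l k' \<le> conjp l k"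
  unfolding conjp_def by (intro card_mono finite_conjp_set) auto

lemma conjp_Suc_part_1:
  assumes "sorted_wrt (\<ge>) l"
  shows "conjp l (Suc (part l 1)) = 0"
proof -
  have "{i. 1 \<le> i \<and> Suc (part l 1) \<le> part l i} = {}"
    using part_antimono[OF assms, of 1] by (auto simp: not_less_eq_eq[symmetric])
  thus ?thesis unfolding conjp_def by (simp only: card.empty)
qed

definition plus_indet :: "int \<Rightarrow> rat poly fract" where
  "plus_indet a = of_int a + indet"

definition minus_indet :: "int \<Rightarrow> rat poly fract" where
  "minus_indet a = of_int a - indet"

lemma of_int_fract: "(of_int m :: 'a::idom fract) = Fract (of_int m) 1"
  by (cases m rule: int_cases2) (simp_all add: of_nat_fract)

lemma plus_indet_nonzero: "plus_indet a \<noteq> 0"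
proof
  assume "plus_indet a = 0"
  hence "Fract [:of_int a, 1:] 1 = Fract 0 (1 :: rat poly)"
    by (simp add: plus_indet_def indet_def of_int_fract Zero_fract_def of_int_poly)
  thus False by (simp add: eq_fract)
qed

lemma minus_indet_eq: "minus_indet a = - plus_indet (- a)"
  by (simp add: plus_indet_def minus_indet_def)

definition lam_hook_ratio :: "nat list \<Rightarrow> int \<Rightarrow> nat \<Rightarrow> rat poly fract" where
  "lam_hook_ratio mu c j =
     plus_indet (c + int (conjp mu j) - int j + 1) / plus_indet (c + int (conjp mu j) - int j)"

definition mu_hook_ratio :: "nat list \<Rightarrow> int \<Rightarrow> nat \<Rightarrow> rat poly fract" where
  "mu_hook_ratio mu c i =
     minus_indet (int (part mu i) - int i - c + 1) / minus_indet (int (part mu i) - int i - c)"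

definition cell_factor :: "nat list \<Rightarrow> int \<Rightarrow> rat poly fract" where
  "cell_factor mu c =
     plus_indet (c - int (part mu 1)) * (\<Prod>k\<in>{1..part mu 1}. lam_hook_ratio mu c k)"

text \<open>
  The factor by which \<open>Z\<close> grows when a cell of content \<open>c\<close> is added to \<open>\<lambda>\<close> in column \<open>L\<close>:
  the new hook, and the hooks increased by one in its row of \<open>\<lambda>\<close> and in column \<open>L\<close> of \<open>\<mu>\<close>.
\<close>
definition hook_growth :: "nat list \<Rightarrow> int \<Rightarrow> nat \<Rightarrow> rat poly fract" where
  "hook_growth mu c L =
     plus_indet (c + int (conjp mu L) - int L + 1) *
     (\<Prod>j\<in>{1..<L}. lam_hook_ratio mu c j) * (\<Prod>i\<in>{1..conjp mu L}. mu_hook_ratio mu c i)"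

lemma prod_mu_hook_ratio_telescope:
  assumes mu: "sorted_wrt (\<ge>) mu" and L: "1 \<le> L"
  shows "(\<Prod>i\<in>{conjp mu (Suc L)<..conjp mu L}. mu_hook_ratio mu c i) =
         plus_indet (c + int (conjp mu (Suc L)) - int L) / plus_indet (c + int (conjp mu L) - int L)"
proof -
  define p where "p = conjp mu (Suc L)"
  define q where "q = conjp mu L"
  define f where "f i = inverse (plus_indet (c + int i - int L))" for i
  have "p \<le> q" unfolding p_def q_def using L by (rule conjp_antimono) simp
  have "mu_hook_ratio mu c i = f i / f (i - 1)" if "i \<in> {Suc p..q}" for i
  proof -
    have "part mu i = L"
      using that le_conjp_iff[OF mu L, of i] le_conjp_iff[OF mu _, of "Suc L" i]
      by (auto simp: p_def q_def)
    thus ?thesis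
      using that by (simp add: mu_hook_ratio_def minus_indet_eq f_def of_nat_diff
          divide_inverse algebra_simps)
  qed
  hence "(\<Prod>i\<in>{p<..q}. mu_hook_ratio mu c i) = (\<Prod>i=Suc p..q. f i / f (i - 1))"
    by (simp add: atLeastSucAtMost_greaterThanAtMost)
  also have "\<dots> = f q / f p"
    by (rule prod_telescope''[OF \<open>p \<le> q\<close>]) (simp add: f_def plus_indet_nonzero)
  finally show ?thesis by (simp add: f_def p_def q_def divide_inverse)
qed

lemma hook_growth_Suc:
  assumes mu: "sorted_wrt (\<ge>) mu" and L: "1 \<le> L"
  shows "hook_growth mu c (Suc L) = hook_growth mu c L"
proof -
  let ?p = "conjp mu (Suc L)" and ?q = "conjp mu L"
  let ?A = "\<Prod>j\<in>{1..<L}. lam_hook_ratio mu c j" and ?B = "\<Prod>i\<in>{1..?p}. mu_hook_ratio mu c i"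
  have split: "{1..?q} = {1..?p} \<union> {?p<..?q}" using conjp_antimono[OF L, of "Suc L" mu] by auto
  have "(\<Prod>i\<in>{1..?q}. mu_hook_ratio mu c i) = ?B * (\<Prod>i\<in>{?p<..?q}. mu_hook_ratio mu c i)"
    unfolding split by (rule prod.union_disjoint) auto
  hence "hook_growth mu c L = plus_indet (c + int ?q - int L + 1) * ?A * ?B *
           (plus_indet (c + int ?p - int L) / plus_indet (c + int ?q - int L))"
    by (simp add: hook_growth_def prod_mu_hook_ratio_telescope[OF mu L] mult.assoc)
  also have "\<dots> = plus_indet (c + int ?p - int L) * (?A * lam_hook_ratio mu c L) * ?B"
    by (simp add: lam_hook_ratio_def algebra_simps)
  also have "\<dots> = hook_growth mu c (Suc L)"
    using L by (simp add: hook_growth_def prod.atLeastLessThan_Suc algebra_simps)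
  finally show ?thesis ..
qed

lemma cell_factor_eq_hook_growth:
  assumes mu: "sorted_wrt (\<ge>) mu" and L: "1 \<le> L"
  shows "cell_factor mu c = hook_growth mu c L"
proof -
  have const: "hook_growth mu c L' = hook_growth mu c 1" if "1 \<le> L'" for L'
    using that by (induction L' rule: dec_induct) (simp_all add: hook_growth_Suc[OF mu])
  have "cell_factor mu c = hook_growth mu c (Suc (part mu 1))"
    unfolding cell_factor_def hook_growth_def conjp_Suc_part_1[OF mu]
    by (simp add: atLeastLessThanSuc_atLeastAtMost)
  thus ?thesis using const[of "Suc (part mu 1)"] const[OF L] by simp
qed

definition X_mu :: "nat list \<Rightarrow> rat poly fract" where
  "X_mu mu = (\<Prod>(i, j)\<in>diagram mu. minus_indet (int j - int i))"

definition X_lam :: "nat list \<Rightarrow> nat list \<Rightarrow> rat poly fract" where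
  "X_lam lam mu = (\<Prod>(i, j)\<in>diagram lam. cell_factor mu (int j - int i))"

definition Z_lam :: "nat list \<Rightarrow> nat list \<Rightarrow> rat poly fract" where
  "Z_lam lam mu = (\<Prod>(i, j)\<in>diagram lam. plus_indet (ghook lam mu i j))"

definition Z_mu :: "nat list \<Rightarrow> nat list \<Rightarrow> rat poly fract" where
  "Z_mu lam mu = (\<Prod>(i, j)\<in>diagram mu. minus_indet (ghook mu lam i j))"

lemma X_lam_snoc_Suc:
  "X_lam (l @ [Suc L]) mu = X_lam (l @ [L]) mu * cell_factor mu (int (Suc L) - int (Suc (length l)))"
  by (simp add: X_lam_def prod_diagram_snoc mult.assoc)

lemma Z_lam_snoc:
  "Z_lam (l @ [b]) mu =
     Z_lam l mu * (\<Prod>j=1..b. plus_indet (int b - int (Suc (length l)) + int (conjp mu j) - int j + 1))"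
proof -
  have "ghook (l @ [b]) mu i j = ghook l mu i j" if "(i, j) \<in> diagram l" for i j
    using that part_eq_0[of l i] by (auto simp: diagram_def ghook_def part_snoc)
  hence "(\<Prod>(i, j)\<in>diagram l. plus_indet (ghook (l @ [b]) mu i j)) = Z_lam l mu"
    unfolding Z_lam_def by (intro prod.cong) auto
  thus ?thesis by (simp add: Z_lam_def prod_diagram_snoc ghook_def part_snoc)
qed

lemma Z_lam_snoc_Suc:
  fixes l :: "nat list" and L :: nat
  defines "c \<equiv> int (Suc L) - int (Suc (length l))"
  shows "Z_lam (l @ [Suc L]) mu =
     Z_lam (l @ [L]) mu * plus_indet (c + int (conjp mu (Suc L)) - int (Suc L) + 1) *
     (\<Prod>j\<in>{1..<Suc L}. lam_hook_ratio mu c j)"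
proof -
  have "(\<Prod>j=1..L. plus_indet (c + int (conjp mu j) - int j + 1)) =
        (\<Prod>j=1..L. plus_indet (c + int (conjp mu j) - int j)) * (\<Prod>j=1..L. lam_hook_ratio mu c j)"
    by (simp add: lam_hook_ratio_def plus_indet_nonzero prod.distrib[symmetric])
  thus ?thesis
    by (simp add: Z_lam_snoc c_def atLeastLessThanSuc_atLeastAtMost algebra_simps)
qed

lemma Z_mu_snoc_Suc:
  fixes l mu :: "nat list" and L :: nat
  assumes mu: "sorted_wrt (\<ge>) mu" and l: "\<forall>x\<in>set l. Suc L \<le> x"
  defines "c \<equiv> int (Suc L) - int (Suc (length l))"
  shows "Z_mu (l @ [Suc L]) mu = Z_mu (l @ [L]) mu * (\<Prod>i=1..conjp mu (Suc L). mu_hook_ratio mu c i)"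
proof -
  let ?r = "\<lambda>x. if snd x = Suc L then mu_hook_ratio mu c (fst x) else 1"
  have conjp_old: "conjp (l @ [L]) (Suc L) = length l"
    using conjp_snoc[of "Suc L" l L] conjp_eq_length[of "Suc L" l] l by simp
  have factor: "minus_indet (ghook mu (l @ [Suc L]) i j) = minus_indet (ghook mu (l @ [L]) i j) * ?r (i, j)"
    if "(i, j) \<in> diagram mu" for i j
  proof (cases "j = Suc L")
    case True
    thus ?thesis
      using conjp_snoc[of "Suc L" l] conjp_old
      by (simp add: ghook_def mu_hook_ratio_def minus_indet_eq plus_indet_nonzero c_def algebra_simps)
  next
    case False
    thus ?thesis using that conjp_snoc[of j l] by (simp add: ghook_def diagram_def)
  qed
  have column: "{x \<in> diagram mu. snd x = Suc L} = (\<lambda>i. (i, Suc L)) ` {1..conjp mu (Suc L)}"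
    using le_conjp_iff[OF mu, of "Suc L"] by (auto simp: diagram_def)
  have "Z_mu (l @ [Suc L]) mu = Z_mu (l @ [L]) mu * prod ?r (diagram mu)"
    unfolding Z_mu_def prod.distrib[symmetric] using factor by (intro prod.cong) auto
  also have "prod ?r (diagram mu) = (\<Prod>x\<in>{x \<in> diagram mu. snd x = Suc L}. mu_hook_ratio mu c (fst x))"
    by (rule prod.inter_filter[OF finite_diagram, symmetric])
  also have "\<dots> = (\<Prod>i=1..conjp mu (Suc L). mu_hook_ratio mu c i)"
    unfolding column by (simp add: prod.reindex inj_on_def)
  finally show ?thesis .
qed

lemma Z_snoc_Suc:
  assumes mu: "sorted_wrt (\<ge>) mu" and l: "\<forall>x\<in>set l. Suc L \<le> x"
  shows "Z_lam (l @ [Suc L]) mu * Z_mu (l @ [Suc L]) mu =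
         hook_growth mu (int (Suc L) - int (Suc (length l))) (Suc L) *
         (Z_lam (l @ [L]) mu * Z_mu (l @ [L]) mu)"
  by (simp add: Z_lam_snoc_Suc Z_mu_snoc_Suc[OF mu l] hook_growth_def ac_simps)

lemma diagram_Nil: "diagram [] = {}"
  by (simp add: diagram_def part_def)

lemma Z_mu_Nil: "Z_mu [] mu = X_mu mu"
proof -
  let ?refl = "\<lambda>(i, j). (i, part mu i + 1 - j)"
  have "Z_mu [] mu = (\<Prod>(i, j)\<in>diagram mu. minus_indet (int (part mu i) - int i - int j + 1))"
    by (simp add: Z_mu_def ghook_def conjp_Nil)
  also have "\<dots> = X_mu mu"
    unfolding X_mu_def
    by (rule prod.reindex_bij_witness[where i = ?refl and j = ?refl])
      (auto simp: diagram_def of_nat_diff algebra_simps)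
  finally show ?thesis .
qed

lemma X_eq_Z_Nil: "X_mu mu * X_lam [] mu = Z_lam [] mu * Z_mu [] mu"
  by (simp add: X_lam_def Z_lam_def Z_mu_Nil diagram_Nil)

lemma X_eq_Z_sorted:
  assumes mu: "sorted_wrt (\<ge>) mu"
  shows "sorted_wrt (\<ge>) lam \<Longrightarrow> X_mu mu * X_lam lam mu = Z_lam lam mu * Z_mu lam mu"
proof (induction lam rule: rev_induct)
  case Nil
  show ?case by (rule X_eq_Z_Nil)
next
  case (snoc a l)
  have l: "sorted_wrt (\<ge>) l" "\<forall>x\<in>set l. a \<le> x"
    using snoc.prems by (auto simp: sorted_wrt_append)
  have "X_mu mu * X_lam (l @ [b]) mu = Z_lam (l @ [b]) mu * Z_mu (l @ [b]) mu" if "b \<le> a" for b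
    using that
  proof (induction b)
    case 0
    show ?case
      using snoc.IH[OF l(1)]
      unfolding X_lam_def Z_lam_def Z_mu_def diagram_def ghook_def conjp_def part_snoc_0 .
  next
    case (Suc L)
    have "\<forall>x\<in>set l. Suc L \<le> x" using l(2) Suc.prems by auto
    thus ?case
      using Suc cell_factor_eq_hook_growth[OF mu, of "Suc L"]
      by (simp add: X_lam_snoc_Suc Z_snoc_Suc[OF mu] ac_simps)
  qed
  thus ?case by simp
qed

theorem lemma4p1:
  fixes lam mu :: "nat list"
  assumes "is_partition lam" and "is_partition mu"
  shows "(\<Prod>(i, j)\<in>diagram mu. (of_int (int j - int i) :: rat poly fract) - indet) *
         (\<Prod>(i, j)\<in>diagram lam.
            ((of_int (int j - int i - int (part mu 1)) :: rat poly fract) + indet) *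
            (\<Prod>k\<in>{1..part mu 1}.
               ((of_int (int j - int i + int (conjp mu k) - int k + 1) :: rat poly fract) + indet) /
               ((of_int (int j - int i + int (conjp mu k) - int k) :: rat poly fract) + indet)))
       = (\<Prod>(i, j)\<in>diagram lam. (of_int (ghook lam mu i j) :: rat poly fract) + indet) *
         (\<Prod>(i, j)\<in>diagram mu. (of_int (ghook mu lam i j) :: rat poly fract) - indet)"
proof -
  have "X_mu mu * X_lam lam mu = Z_lam lam mu * Z_mu lam mu"
    using X_eq_Z_sorted assms by (simp add: is_partition_def)
  thus ?thesis
    unfolding X_mu_def X_lam_def Z_lam_def Z_mu_def cell_factor_def lam_hook_ratio_def
      plus_indet_def minus_indet_def .
qed

end
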